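(* Let $N\ge2$, $\mathcal N=\{1,\dots,N\}$, $\mathcal F=\{(i,j):i<j\}$, $B,M_1,\dots,M_N\in\mathbb Z_{\ge0}$, $p_1,\dots,p_N\in[0,1]$, $p_{\mathrm{swap}}\in[0,1]$, $\Delta t_{\mathrm{mem}}>0$. Let $\mathcal C=\prod_{i}\{0,1,\dots,M_i\}$ with probability mass function $\pi(c)=\prod_i\binom{M_i}{c_i}p_i^{c_i}(1-p_i)^{M_i-c_i}$. For $c\in\mathcal C$ let $\mathcal Y(c)=\{y\in\mathbb Z_{\ge0}^{\mathcal F}: \sum_{j<i}y_{ji}+\sum_{j>i}y_{ij}\le c_i\ \forall i,\ \sum_{(i,j)\in\mathcal F}y_{ij}\le B\}$. Define $$\Lambda_{\mathrm{mem}}=\Big\{\lambda\in\mathbb R_{\ge0}^{\mathcal F}:\ \exists\, v \text{ with } v(c)\in\mathrm{co}\,\mathcal Y(c)\ \forall c\in\mathcal C,\ \lambda=\frac{p_{\mathrm{swap}}}{\Delta t_{\mathrm{mem}}}\sum_{c\in\mathcal C}\pi(c)v(c)\Big\}.$$ Then $$\max_{\lambda\in\Lambda_{\mathrm{mem}}}\sum_{(i,j)\in\mathcal F}\lambda_{ij}=\frac{p_{\mathrm{swap}}}{\Delta t_{\mathrm{mem}}}\sum_{c\in\mathcal C}\pi(c)\,\min\Big\{B,\ \Big\lfloor\tfrac12\sum_i c_i\Big\rfloor,\ \sum_i c_i-\max_i c_i\Big\}.$$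
   Context: This models a memory-equipped (herald-then-swap) quantum switch: $c_i$ is the number of the $M_i$ switch memories dedicated to client $i$ that hold a successful link-level entangled pair in a slot (each independently with probability $p_i$), $v(c)$ is the expected BSM-pairing vector chosen by a stationary randomized scheduling rule upon observing $c$, $p_{\mathrm{swap}}$ the success probability of each swap, and $\Delta t_{\mathrm{mem}}$ the slot duration; $\mathrm{co}$ denotes convex hull. *)

theory Defs
  imports "HOL-Analysis.Analysis"
begin

definition flows :: "nat \<Rightarrow> (nat \<times> nat) set" where
  "flows N = {(i, j). 1 \<le> i \<and> i < j \<and> j \<le> N}"

definition configs :: "nat \<Rightarrow> (nat \<Rightarrow> nat) \<Rightarrow> (nat \<Rightarrow> nat) set" where
  "configs N M = PiE {1..N} (\<lambda>i. {0..M i})"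

definition pmf_cfg :: "nat \<Rightarrow> (nat \<Rightarrow> nat) \<Rightarrow> (nat \<Rightarrow> real) \<Rightarrow> (nat \<Rightarrow> nat) \<Rightarrow> real" where
  "pmf_cfg N M p c = (\<Prod>i\<in>{1..N}. real (M i choose c i) * p i ^ c i * (1 - p i) ^ (M i - c i))"

definition Yset :: "nat \<Rightarrow> nat \<Rightarrow> (nat \<Rightarrow> nat) \<Rightarrow> ((nat \<times> nat) \<Rightarrow> real) set" where
  "Yset N B c = {y. (\<forall>f. f \<notin> flows N \<longrightarrow> y f = 0)
      \<and> (\<forall>f\<in>flows N. y f \<in> \<nat>)
      \<and> (\<forall>i\<in>{1..N}. (\<Sum>j\<in>{1..<i}. y (j, i)) + (\<Sum>j\<in>{i<..N}. y (i, j)) \<le> real (c i))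
      \<and> (\<Sum>f\<in>flows N. y f) \<le> real B}"

text \<open>Convex hull of a set of real-valued functions: all finite convex combinations
  (the function space carries no real_vector instance in the library).\<close>
definition cohull :: "('a \<Rightarrow> real) set \<Rightarrow> ('a \<Rightarrow> real) set" where
  "cohull S = {x. \<exists>T u. finite T \<and> T \<subseteq> S \<and> T \<noteq> {} \<and> (\<forall>y\<in>T. 0 \<le> u y)
      \<and> sum u T = 1 \<and> x = (\<lambda>k. \<Sum>y\<in>T. u y * y k)}"

definition Lambda_mem :: "nat \<Rightarrow> nat \<Rightarrow> (nat \<Rightarrow> nat) \<Rightarrow> (nat \<Rightarrow> real) \<Rightarrow> real \<Rightarrow> real
    \<Rightarrow> ((nat \<times> nat) \<Rightarrow> real) set" where
  "Lambda_mem N B M p pswap dt = {lam. (\<forall>f\<in>flows N. 0 \<le> lam f) \<and>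
      (\<exists>v. (\<forall>c\<in>configs N M. v c \<in> cohull (Yset N B c)) \<and>
           lam = (\<lambda>f. pswap / dt * (\<Sum>c\<in>configs N M. pmf_cfg N M p c * v c f)))}"

end

theory Submission
  imports Defs
begin

(* For a fixed configuration c, a pairing vector y is a multigraph on the clients with at most
  B edges in which client i has degree at most c i.  With S the total number of memories and k a
  client with maximal c k, its number e of edges satisfies 2 e = (sum of degrees) <= S, and, as at
  most e edges meet k, also 2 e <= e + (S - c k).  Conversely, lay the S memories out in a row,
  client by client, and for t < K pair slot t with slot t + s, where s = max (S div 2) (c k): the
  shift exceeds every block, so each pair joins two distinct clients, and K <= s, K + s <= S make
  all used slots distinct.  Total throughput is linear and monotone in the convex combinations
  and in the average over configurations, so its maximum over the capacity region is the average
  of the per-configuration maxima, attained by a deterministic scheduling rule. *)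

definition load :: "((nat \<times> nat) \<Rightarrow> real) \<Rightarrow> nat \<Rightarrow> nat \<Rightarrow> real" where
  "load y N i = (\<Sum>j\<in>{1..<i}. y (j, i)) + (\<Sum>j\<in>{i<..N}. y (i, j))"

lemma flows_eq_Sigma: "flows N = Sigma {1..N} (\<lambda>i. {i<..N})"
  unfolding flows_def by auto

lemma finite_flows: "finite (flows N)"
  by (simp add: flows_eq_Sigma)

lemma mem_Yset_iff:
  "y \<in> Yset N B c \<longleftrightarrow> (\<forall>f. f \<notin> flows N \<longrightarrow> y f = 0) \<and> (\<forall>f\<in>flows N. y f \<in> \<nat>)
     \<and> (\<forall>i\<in>{1..N}. load y N i \<le> real (c i)) \<and> (\<Sum>f\<in>flows N. y f) \<le> real B"
  by (simp add: Yset_def load_def)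

lemma Yset_nonneg:
  assumes "y \<in> Yset N B c"
  shows "0 \<le> y f"
proof (cases "f \<in> flows N")
  case True
  then obtain n where "y f = of_nat n"
    using assms by (auto simp: mem_Yset_iff elim!: Nats_cases)
  then show ?thesis
    by simp
next
  case False
  then show ?thesis
    using assms unfolding mem_Yset_iff by (metis order_refl)
qed

lemma sum_load: "(\<Sum>i\<in>{1..N}. load y N i) = 2 * (\<Sum>f\<in>flows N. y f)"
proof -
  have out: "(\<Sum>i\<in>{1..N}. \<Sum>j\<in>{i<..N}. y (i, j)) = (\<Sum>f\<in>flows N. y f)"
    by (simp add: flows_eq_Sigma sum.Sigma)
  have "(\<Sum>i\<in>{1..N}. \<Sum>j\<in>{1..<i}. y (j, i)) = (\<Sum>(i, j)\<in>Sigma {1..N} (\<lambda>i. {1..<i}). y (j, i))"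
    by (simp add: sum.Sigma)
  also have "Sigma {1..N} (\<lambda>i. {1..<i}) = prod.swap ` flows N"
    unfolding flows_def by (auto simp: image_iff)
  also have "(\<Sum>(i, j)\<in>prod.swap ` flows N. y (j, i)) = (\<Sum>f\<in>flows N. y f)"
    by (subst sum.reindex) (auto simp: inj_on_def)
  finally show ?thesis
    using out by (simp add: load_def sum.distrib)
qed

lemma load_le_sum_flows:
  assumes "\<forall>f\<in>flows N. 0 \<le> y f" and "k \<in> {1..N}"
  shows "load y N k \<le> (\<Sum>f\<in>flows N. y f)"
proof -
  have "load y N k = (\<Sum>f\<in>(\<lambda>j. (j, k)) ` {1..<k}. y f) + (\<Sum>f\<in>(\<lambda>j. (k, j)) ` {k<..N}. y f)"
    unfolding load_def by (subst (1 2) sum.reindex) (auto simp: inj_on_def)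
  also have "\<dots> = (\<Sum>f\<in>(\<lambda>j. (j, k)) ` {1..<k} \<union> (\<lambda>j. (k, j)) ` {k<..N}. y f)"
    by (rule sum.union_disjoint[symmetric]) auto
  also have "\<dots> \<le> (\<Sum>f\<in>flows N. y f)"
    by (rule sum_mono2[OF finite_flows]) (use assms in \<open>auto simp: flows_def\<close>)
  finally show ?thesis .
qed

lemma sum_in_Nats: "(\<And>x. x \<in> A \<Longrightarrow> f x \<in> \<nat>) \<Longrightarrow> sum f A \<in> \<nat>"
  by (induction A rule: infinite_finite_induct) auto

lemma Max_client_exists:
  fixes N :: nat and c :: "nat \<Rightarrow> 'a::linorder"
  assumes "1 \<le> N"
  obtains k where "k \<in> {1..N}" and "Max (c ` {1..N}) = c k"
proof -
  have "Max (c ` {1..N}) \<in> c ` {1..N}"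
    using assms by (simp add: Max_in)
  then show ?thesis
    using that by auto
qed

definition pairing_bound :: "nat \<Rightarrow> nat \<Rightarrow> (nat \<Rightarrow> nat) \<Rightarrow> nat" where
  "pairing_bound N B c = min B (min ((\<Sum>i\<in>{1..N}. c i) div 2)
                                   ((\<Sum>i\<in>{1..N}. c i) - Max (c ` {1..N})))"

lemma sum_flows_le_pairing_bound:
  assumes "1 \<le> N" and "y \<in> Yset N B c"
  shows "(\<Sum>f\<in>flows N. y f) \<le> real (pairing_bound N B c)"
proof -
  define S where "S = (\<Sum>i\<in>{1..N}. c i)"
  obtain k where k: "k \<in> {1..N}" and kmax: "Max (c ` {1..N}) = c k"
    using Max_client_exists[OF assms(1)] .
  from assms(2) have y0: "\<forall>f\<in>flows N. y f \<in> \<nat>" and yload: "\<forall>i\<in>{1..N}. load y N i \<le> real (c i)"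
    and yB: "(\<Sum>f\<in>flows N. y f) \<le> real B"
    unfolding mem_Yset_iff by auto
  obtain e where e: "(\<Sum>f\<in>flows N. y f) = real e"
    using sum_in_Nats[of "flows N" y] y0 by (auto elim: Nats_cases)
  have ynonneg: "\<forall>f\<in>flows N. 0 \<le> y f"
    using Yset_nonneg[OF assms(2)] by blast
  have loads: "(\<Sum>i\<in>{1..N}. load y N i) \<le> real S"
    unfolding S_def of_nat_sum by (rule sum_mono) (use yload in auto)
  have "(\<Sum>i\<in>{1..N}. load y N i) = load y N k + (\<Sum>i\<in>{1..N} - {k}. load y N i)"
    using k by (simp add: sum.remove)
  also have "\<dots> \<le> real e + (\<Sum>i\<in>{1..N} - {k}. real (c i))"
    using load_le_sum_flows[OF ynonneg k] yload e by (intro add_mono sum_mono) auto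
  also have "(\<Sum>i\<in>{1..N} - {k}. real (c i)) = real S - real (c k)"
    using k by (simp add: S_def of_nat_sum sum.remove)
  finally have "e \<le> S - c k"
    using sum_load[of y N] e by linarith
  moreover have "e \<le> S div 2"
    using sum_load[of y N] loads e by linarith
  moreover have "e \<le> B"
    using yB e by simp
  ultimately show ?thesis
    using e unfolding pairing_bound_def kmax S_def[symmetric] by simp
qed

definition block_end :: "(nat \<Rightarrow> nat) \<Rightarrow> nat \<Rightarrow> nat" where
  "block_end c i = (\<Sum>j\<in>{1..i}. c j)"

(* Client i owns the memory slots u with block_end c (i - 1) <= u < block_end c i. *)
definition owner :: "(nat \<Rightarrow> nat) \<Rightarrow> nat \<Rightarrow> nat" where
  "owner c u = (LEAST i. u < block_end c i)"

lemma block_end_0 [simp]: "block_end c 0 = 0"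
  by (simp add: block_end_def)

lemma block_end_Suc: "block_end c (Suc i) = block_end c i + c (Suc i)"
  by (simp add: block_end_def sum.cl_ivl_Suc)

lemma owner_bounds:
  assumes "u < block_end c N"
  shows "owner c u \<in> {1..N}" and "block_end c (owner c u) - c (owner c u) \<le> u"
    and "u < block_end c (owner c u)"
proof -
  show upper: "u < block_end c (owner c u)"
    unfolding owner_def by (rule LeastI[of _ N]) (rule assms)
  have "owner c u \<le> N"
    unfolding owner_def by (rule Least_le) (rule assms)
  moreover have pos: "owner c u \<noteq> 0"
    using upper by (metis block_end_0 not_less0)
  ultimately show "owner c u \<in> {1..N}"
    by simp
  have "\<not> u < block_end c (owner c u - 1)"
    unfolding owner_def by (rule not_less_Least) (use pos in \<open>simp add: owner_def\<close>)
  moreover have "block_end c (owner c u) = block_end c (owner c u - 1) + c (owner c u)"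
    using pos block_end_Suc[of c "owner c u - 1"] by simp
  ultimately show "block_end c (owner c u) - c (owner c u) \<le> u"
    by simp
qed

lemma card_owner_le: "card {u. u < block_end c N \<and> owner c u = i} \<le> c i"
proof -
  have "{u. u < block_end c N \<and> owner c u = i} \<subseteq> {block_end c i - c i..<block_end c i}"
    using owner_bounds(2,3) by fastforce
  then have "card {u. u < block_end c N \<and> owner c u = i} \<le> card {block_end c i - c i..<block_end c i}"
    by (rule card_mono[rotated]) simp
  then show ?thesis
    by simp
qed

lemma owner_shift_neq:
  assumes "\<forall>i\<in>{1..N}. c i \<le> s" and "u + s < block_end c N"
  shows "owner c u \<noteq> owner c (u + s)"
proof
  assume same: "owner c u = owner c (u + s)"
  have "u < block_end c N"
    using assms(2) by simp
  with owner_bounds[OF this] owner_bounds[OF assms(2)] same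
  have "s < c (owner c u)" and "owner c u \<in> {1..N}"
    by auto
  with assms(1) show False
    by fastforce
qed

lemma card_shifted_owner_le:
  assumes "K \<le> s" and "K + s \<le> block_end c N"
  shows "card {t\<in>{..<K}. owner c t = i} + card {t\<in>{..<K}. owner c (t + s) = i} \<le> c i"
proof -
  have "card {t\<in>{..<K}. owner c (t + s) = i} = card ((\<lambda>t. t + s) ` {t\<in>{..<K}. owner c (t + s) = i})"
    by (rule card_image[symmetric]) (auto simp: inj_on_def)
  then have "card {t\<in>{..<K}. owner c t = i} + card {t\<in>{..<K}. owner c (t + s) = i}
      = card ({t\<in>{..<K}. owner c t = i} \<union> (\<lambda>t. t + s) ` {t\<in>{..<K}. owner c (t + s) = i})"
    by (subst card_Un_disjoint) (use assms(1) in auto)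
  also have "\<dots> \<le> card {u. u < block_end c N \<and> owner c u = i}"
    by (rule card_mono) (use assms in auto)
  also have "\<dots> \<le> c i"
    by (rule card_owner_le)
  finally show ?thesis .
qed

definition flow_of :: "nat \<Rightarrow> nat \<Rightarrow> nat \<times> nat" where
  "flow_of u v = (min u v, max u v)"

lemma flow_of_in_flows: "u \<in> {1..N} \<Longrightarrow> v \<in> {1..N} \<Longrightarrow> u \<noteq> v \<Longrightarrow> flow_of u v \<in> flows N"
  by (auto simp: flow_of_def flows_def)

definition edge_count :: "('t \<Rightarrow> nat) \<Rightarrow> ('t \<Rightarrow> nat) \<Rightarrow> 't set \<Rightarrow> nat \<times> nat \<Rightarrow> real" where
  "edge_count a b T f = real (card {t\<in>T. flow_of (a t) (b t) = f})"

context
  fixes a b :: "'t \<Rightarrow> nat" and T :: "'t set" and N :: nat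
  assumes finite_T: "finite T"
    and edges: "\<forall>t\<in>T. a t \<in> {1..N} \<and> b t \<in> {1..N} \<and> a t \<noteq> b t"
begin

lemma edge_count_eq_0:
  assumes "f \<notin> flows N"
  shows "edge_count a b T f = 0"
proof -
  have "{t\<in>T. flow_of (a t) (b t) = f} = {}"
    using assms edges flow_of_in_flows by blast
  then show ?thesis
    unfolding edge_count_def by (metis card.empty of_nat_0)
qed

lemma sum_flows_edge_count: "(\<Sum>f\<in>flows N. edge_count a b T f) = real (card T)"
proof -
  have "(\<Sum>f\<in>flows N. card {t\<in>T. flow_of (a t) (b t) = f})
      = (\<Sum>f\<in>flows N. \<Sum>t\<in>{t\<in>T. flow_of (a t) (b t) = f}. 1)"
    by simp
  also have "\<dots> = card T"
    using edges flow_of_in_flows by (subst sum.group) (auto simp: finite_T finite_flows)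
  finally show ?thesis
    by (simp add: edge_count_def flip: of_nat_sum)
qed

lemma load_edge_count:
  "load (edge_count a b T) N i = real (card {t\<in>T. a t = i} + card {t\<in>T. b t = i})"
proof -
  define lo where "lo t = fst (flow_of (a t) (b t))" for t
  define hi where "hi t = snd (flow_of (a t) (b t))" for t
  have lohi: "t \<in> T \<Longrightarrow> 1 \<le> lo t \<and> lo t < hi t \<and> hi t \<le> N" for t
    using flow_of_in_flows edges unfolding lo_def hi_def flows_def by fastforce
  have "(\<Sum>j\<in>{1..<i}. card {t\<in>T. flow_of (a t) (b t) = (j, i)})
      = (\<Sum>j\<in>{1..<i}. \<Sum>t\<in>{t\<in>{t\<in>T. hi t = i}. lo t = j}. 1)"
    by (intro sum.cong refl) (auto simp: lo_def hi_def prod_eq_iff intro!: arg_cong[where f = card])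
  also have "\<dots> = card {t\<in>T. hi t = i}"
    using lohi by (subst sum.group) (auto simp: finite_T)
  finally have in_edges: "(\<Sum>j\<in>{1..<i}. card {t\<in>T. flow_of (a t) (b t) = (j, i)}) = card {t\<in>T. hi t = i}" .
  have "(\<Sum>j\<in>{i<..N}. card {t\<in>T. flow_of (a t) (b t) = (i, j)})
      = (\<Sum>j\<in>{i<..N}. \<Sum>t\<in>{t\<in>{t\<in>T. lo t = i}. hi t = j}. 1)"
    by (intro sum.cong refl) (auto simp: lo_def hi_def prod_eq_iff intro!: arg_cong[where f = card])
  also have "\<dots> = card {t\<in>T. lo t = i}"
    using lohi by (subst sum.group) (auto simp: finite_T)
  finally have out_edges: "(\<Sum>j\<in>{i<..N}. card {t\<in>T. flow_of (a t) (b t) = (i, j)}) = card {t\<in>T. lo t = i}" .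
  have "card {t\<in>T. hi t = i} + card {t\<in>T. lo t = i} = card ({t\<in>T. hi t = i} \<union> {t\<in>T. lo t = i})"
    by (subst card_Un_disjoint) (auto simp: finite_T dest: lohi)
  also have "{t\<in>T. hi t = i} \<union> {t\<in>T. lo t = i} = {t\<in>T. a t = i} \<union> {t\<in>T. b t = i}"
    by (auto simp: lo_def hi_def flow_of_def min_def max_def)
  also have "card \<dots> = card {t\<in>T. a t = i} + card {t\<in>T. b t = i}"
    using edges by (subst card_Un_disjoint) (auto simp: finite_T)
  finally show ?thesis
    unfolding load_def edge_count_def of_nat_sum[symmetric] in_edges out_edges by simp
qed

end

lemma pairing_bound_attained:
  assumes "1 \<le> N"
  shows "\<exists>y\<in>Yset N B c. (\<Sum>f\<in>flows N. y f) = real (pairing_bound N B c)"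
proof -
  define K where "K = pairing_bound N B c"
  define S where "S = block_end c N"
  define s where "s = max (S div 2) (Max (c ` {1..N}))"
  obtain k where k: "k \<in> {1..N}" and kmax: "Max (c ` {1..N}) = c k"
    using Max_client_exists[OF assms] .
  have c_le_s: "\<forall>i\<in>{1..N}. c i \<le> s"
    unfolding s_def by (simp add: le_max_iff_disj)
  have "c k \<le> S"
    unfolding S_def block_end_def using k by (intro member_le_sum) auto
  moreover have "K \<le> S div 2" and "K \<le> S - c k"
    unfolding K_def pairing_bound_def kmax S_def block_end_def by auto
  ultimately have K_le_s: "K \<le> s" and K_s_le_S: "K + s \<le> S"
    unfolding s_def kmax by linarith+
  define a where "a = owner c"
  define b where "b t = owner c (t + s)" for t
  have edges: "\<forall>t\<in>{..<K}. a t \<in> {1..N} \<and> b t \<in> {1..N} \<and> a t \<noteq> b t"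
  proof
    fix t assume "t \<in> {..<K}"
    then have "t < block_end c N" and shifted: "t + s < block_end c N"
      using K_le_s K_s_le_S unfolding S_def by auto
    then show "a t \<in> {1..N} \<and> b t \<in> {1..N} \<and> a t \<noteq> b t"
      using owner_bounds(1) owner_shift_neq[OF c_le_s shifted] unfolding a_def b_def by blast
  qed
  define y where "y = edge_count a b {..<K}"
  have total: "(\<Sum>f\<in>flows N. y f) = real K"
    unfolding y_def using sum_flows_edge_count[OF finite_lessThan edges] by simp
  have "y \<in> Yset N B c"
    unfolding mem_Yset_iff
  proof (intro conjI allI ballI impI)
    show "y f = 0" if "f \<notin> flows N" for f
      unfolding y_def using edge_count_eq_0[OF finite_lessThan edges that] by simp
    show "y f \<in> \<nat>" for f
      by (simp add: y_def edge_count_def)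
    show "load y N i \<le> real (c i)" for i
      unfolding y_def load_edge_count[OF finite_lessThan edges] of_nat_le_iff
      unfolding a_def b_def
      by (rule card_shifted_owner_le[OF K_le_s K_s_le_S[unfolded S_def]])
    show "(\<Sum>f\<in>flows N. y f) \<le> real B"
      by (simp add: total K_def pairing_bound_def)
  qed
  with total show ?thesis
    unfolding K_def by blast
qed

lemma in_cohull: "y \<in> S \<Longrightarrow> y \<in> cohull S"
  unfolding cohull_def by (intro CollectI exI[of _ "{y}"] exI[of _ "\<lambda>_. 1"]) auto

lemma sum_cohull_le:
  assumes "x \<in> cohull S" and "\<forall>y\<in>S. (\<Sum>k\<in>A. y k) \<le> r"
  shows "(\<Sum>k\<in>A. x k) \<le> r"
proof -
  obtain T u where T: "finite T" "T \<subseteq> S" "\<forall>y\<in>T. 0 \<le> u y" "sum u T = 1"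
    and x: "x = (\<lambda>k. \<Sum>y\<in>T. u y * y k)"
    using assms(1) unfolding cohull_def by blast
  have "(\<Sum>k\<in>A. x k) = (\<Sum>y\<in>T. u y * (\<Sum>k\<in>A. y k))"
    unfolding x by (simp add: sum_distrib_left sum.swap[of _ A])
  also have "\<dots> \<le> (\<Sum>y\<in>T. u y * r)"
    using T assms(2) by (intro sum_mono mult_left_mono) auto
  also have "\<dots> = r"
    using T(4) by (simp flip: sum_distrib_right)
  finally show ?thesis .
qed

lemma pmf_cfg_nonneg: "\<forall>i\<in>{1..N}. 0 \<le> p i \<and> p i \<le> 1 \<Longrightarrow> 0 \<le> pmf_cfg N M p c"
  unfolding pmf_cfg_def by (intro prod_nonneg) auto

lemma sum_flows_average:
  fixes w :: "'c \<Rightarrow> 'a::comm_semiring_0"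
  shows "(\<Sum>f\<in>F. r * (\<Sum>c\<in>C. w c * v c f)) = r * (\<Sum>c\<in>C. w c * (\<Sum>f\<in>F. v c f))"
  by (simp add: sum_distrib_left sum.swap[of _ F])

lemma Lambda_mem_sum_le:
  assumes "\<forall>i\<in>{1..N}. 0 \<le> p i \<and> p i \<le> 1" and "0 \<le> pswap / dt"
    and bound: "\<forall>c\<in>configs N M. \<forall>y\<in>Yset N B c. (\<Sum>f\<in>flows N. y f) \<le> r c"
    and "lam \<in> Lambda_mem N B M p pswap dt"
  shows "(\<Sum>f\<in>flows N. lam f) \<le> pswap / dt * (\<Sum>c\<in>configs N M. pmf_cfg N M p c * r c)"
proof -
  obtain v where v: "\<forall>c\<in>configs N M. v c \<in> cohull (Yset N B c)"
    and lam: "lam = (\<lambda>f. pswap / dt * (\<Sum>c\<in>configs N M. pmf_cfg N M p c * v c f))"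
    using assms(4) unfolding Lambda_mem_def by blast
  have "(\<Sum>f\<in>flows N. lam f)
      = pswap / dt * (\<Sum>c\<in>configs N M. pmf_cfg N M p c * (\<Sum>f\<in>flows N. v c f))"
    unfolding lam sum_flows_average ..
  also have "\<dots> \<le> pswap / dt * (\<Sum>c\<in>configs N M. pmf_cfg N M p c * r c)"
    using v bound pmf_cfg_nonneg[OF assms(1)]
    by (intro mult_left_mono[OF _ assms(2)] sum_mono mult_left_mono sum_cohull_le) auto
  finally show ?thesis .
qed

lemma Lambda_mem_sum_attained:
  assumes "\<forall>i\<in>{1..N}. 0 \<le> p i \<and> p i \<le> 1" and "0 \<le> pswap / dt"
    and "\<forall>c\<in>configs N M. \<exists>y\<in>Yset N B c. (\<Sum>f\<in>flows N. y f) = r c"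
  shows "\<exists>lam\<in>Lambda_mem N B M p pswap dt.
           (\<Sum>f\<in>flows N. lam f) = pswap / dt * (\<Sum>c\<in>configs N M. pmf_cfg N M p c * r c)"
proof -
  obtain v where v: "\<forall>c\<in>configs N M. v c \<in> Yset N B c \<and> (\<Sum>f\<in>flows N. v c f) = r c"
    using assms(3) by metis
  define lam where "lam f = pswap / dt * (\<Sum>c\<in>configs N M. pmf_cfg N M p c * v c f)" for f
  have "lam \<in> Lambda_mem N B M p pswap dt"
    unfolding Lambda_mem_def
  proof (intro CollectI conjI ballI exI)
    have "0 \<le> v c f" if "c \<in> configs N M" for c f
      using v that Yset_nonneg by blast
    then show "0 \<le> lam f" for f
      unfolding lam_def using assms(2) pmf_cfg_nonneg[OF assms(1)]
      by (intro mult_nonneg_nonneg sum_nonneg) auto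
    show "v c \<in> cohull (Yset N B c)" if "c \<in> configs N M" for c
      using v that by (simp add: in_cohull)
  qed (simp add: lam_def fun_eq_iff)
  moreover have "(\<Sum>f\<in>flows N. lam f) = pswap / dt * (\<Sum>c\<in>configs N M. pmf_cfg N M p c * r c)"
    unfolding lam_def sum_flows_average using v by simp
  ultimately show ?thesis
    by blast
qed

theorem mainTheorem3:
  fixes N B :: nat and M :: "nat \<Rightarrow> nat" and p :: "nat \<Rightarrow> real" and pswap dt :: real
  assumes "N \<ge> 2"
    and "\<forall>i\<in>{1..N}. 0 \<le> p i \<and> p i \<le> 1"
    and "0 \<le> pswap" and "pswap \<le> 1"
    and "dt > 0"
  shows "(\<exists>lam\<in>Lambda_mem N B M p pswap dt.
            (\<Sum>f\<in>flows N. lam f) =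
              pswap / dt * (\<Sum>c\<in>configs N M. pmf_cfg N M p c *
                 real (min B (min ((\<Sum>i\<in>{1..N}. c i) div 2)
                                  ((\<Sum>i\<in>{1..N}. c i) - Max (c ` {1..N}))))))
       \<and> (\<forall>lam\<in>Lambda_mem N B M p pswap dt.
            (\<Sum>f\<in>flows N. lam f) \<le>
              pswap / dt * (\<Sum>c\<in>configs N M. pmf_cfg N M p c *
                 real (min B (min ((\<Sum>i\<in>{1..N}. c i) div 2)
                                  ((\<Sum>i\<in>{1..N}. c i) - Max (c ` {1..N}))))))"
proof -
  have N: "1 \<le> N"
    using assms(1) by simp
  have rate: "0 \<le> pswap / dt"
    using assms(3,5) by simp
  have "\<exists>lam\<in>Lambda_mem N B M p pswap dt. (\<Sum>f\<in>flows N. lam f)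
      = pswap / dt * (\<Sum>c\<in>configs N M. pmf_cfg N M p c * real (pairing_bound N B c))"
    using pairing_bound_attained[OF N] by (intro Lambda_mem_sum_attained[OF assms(2) rate]) blast
  moreover have "\<forall>lam\<in>Lambda_mem N B M p pswap dt. (\<Sum>f\<in>flows N. lam f)
      \<le> pswap / dt * (\<Sum>c\<in>configs N M. pmf_cfg N M p c * real (pairing_bound N B c))"
    using sum_flows_le_pairing_bound[OF N] by (intro ballI Lambda_mem_sum_le[OF assms(2) rate]) blast+
  ultimately show ?thesis
    unfolding pairing_bound_def by (rule conjI)
qed

end
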